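(* Let $T(t)$ and $S(t)$ be chaotic strongly continuous semigroups on Banach spaces $X$ and $Y$, respectively, and let $\alpha$ be a uniform crossnorm on the algebraic tensor product $X\otimes Y$. Then the semigroup $T(t)\otimes S(t)$ on the completion $X\tilde{\otimes}_\alpha Y$ of $(X\otimes Y,\alpha)$ satisfies the recurrent hypercyclicity criterion.
   Context: A strongly continuous semigroup $R(t)$ on a Banach space $Z$ is hypercyclic if some $z\in Z$ has dense orbit $\{R(t)z:t\ge0\}$, and chaotic if it is hypercyclic and the set of periodic points $\{z\in Z:\exists t>0,\ R(t)z=z\}$ is dense in $Z$. A uniform crossnorm on $X\otimes Y$ is a reasonable crossnorm $\alpha$ (in particular $\alpha(x\otimes y)=\|x\|\|y\|$) such that $\|A\otimes B\|\le\|A\|\|B\|$ on $(X\otimes Y,\alpha)$ for all bounded operators $A$ on $X$, $B$ on $Y$. $T(t)\otimes S(t)$ is defined by $x\otimes y\mapsto T(t)x\otimes S(t)y$ and extended by continuity. A strongly continuous semigroup $R(t)$ on a (separable) Banach space $Z$ satisfies the recurrent hypercyclicity criterion if for all non-empty open $U,V,W\subset Z$ with $0\in W$ there is $L\ge0$ such that every interval $[t,t+L]$ contains some $s$ with $R(s)U\cap W\neq\emptyset$ and $R(s)W\cap V\neq\emptyset$. *)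

theory Defs
  imports "HOL-Analysis.Analysis"
begin

text \<open>Strongly continuous (C_0) semigroup on a (real) Banach space; only t \<ge> 0 matters.\<close>
definition strongly_continuous_semigroup :: "(real \<Rightarrow> 'a::banach \<Rightarrow> 'a) \<Rightarrow> bool" where
  "strongly_continuous_semigroup T \<longleftrightarrow>
     (\<forall>t\<ge>0. bounded_linear (T t)) \<and>
     T 0 = id \<and>
     (\<forall>s\<ge>0. \<forall>t\<ge>0. T (s + t) = T s \<circ> T t) \<and>
     (\<forall>x. ((\<lambda>t. T t x) \<longlongrightarrow> x) (at_right 0))"

definition hypercyclic_sg :: "(real \<Rightarrow> 'a::banach \<Rightarrow> 'a) \<Rightarrow> bool" where
  "hypercyclic_sg R \<longleftrightarrow> (\<exists>z. closure {R t z | t. t \<ge> 0} = UNIV)"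

definition chaotic_sg :: "(real \<Rightarrow> 'a::banach \<Rightarrow> 'a) \<Rightarrow> bool" where
  "chaotic_sg R \<longleftrightarrow> hypercyclic_sg R \<and> closure {z. \<exists>t>0. R t z = z} = UNIV"

definition recurrent_hypercyclicity_criterion :: "(real \<Rightarrow> 'a::banach \<Rightarrow> 'a) \<Rightarrow> bool" where
  "recurrent_hypercyclicity_criterion R \<longleftrightarrow>
     (\<forall>U V W. open U \<and> U \<noteq> {} \<and> open V \<and> V \<noteq> {} \<and> open W \<and> 0 \<in> W \<longrightarrow>
        (\<exists>L\<ge>0. \<forall>t\<ge>0. \<exists>s\<in>{t..t+L}. R s ` U \<inter> W \<noteq> {} \<and> R s ` W \<inter> V \<noteq> {}))"

text \<open>A Banach space Z with a map tens realises the completion of the algebraic tensor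
  product X \<otimes> Y w.r.t. the norm alpha inherited from Z (alpha(u) = norm of the image of u).
  Conditions: tens bilinear; the induced linear map from the algebraic tensor product is
  injective (so alpha is a norm on X \<otimes> Y); elementary tensors span a dense subspace.\<close>
definition tensor_completion :: "('a::banach \<Rightarrow> 'b::banach \<Rightarrow> 'c::banach) \<Rightarrow> bool" where
  "tensor_completion tens \<longleftrightarrow>
     (\<forall>y. linear (\<lambda>x. tens x y)) \<and> (\<forall>x. linear (\<lambda>y. tens x y)) \<and>
     (\<forall>(I::nat set) x y. finite I \<and> independent (x ` I) \<and> inj_on x I \<and>
          (\<Sum>i\<in>I. tens (x i) (y i)) = 0 \<longrightarrow> (\<forall>i\<in>I. y i = 0)) \<and>
     closure (span (range (\<lambda>(x, y). tens x y))) = UNIV"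

text \<open>The norm alpha is a reasonable crossnorm: alpha(x \<otimes> y) = |x||y| and for bounded
  linear functionals f, g the functional f \<otimes> g is bounded by |f||g|.\<close>
definition reasonable_crossnorm :: "('a::banach \<Rightarrow> 'b::banach \<Rightarrow> 'c::banach) \<Rightarrow> bool" where
  "reasonable_crossnorm tens \<longleftrightarrow>
     (\<forall>x y. norm (tens x y) = norm x * norm y) \<and>
     (\<forall>f g. bounded_linear f \<and> bounded_linear g \<longrightarrow>
        (\<forall>(I::nat set) x y. finite I \<longrightarrow>
           \<bar>\<Sum>i\<in>I. (f (x i) :: real) * (g (y i) :: real)\<bar>
             \<le> onorm f * onorm g * norm (\<Sum>i\<in>I. tens (x i) (y i))))"

text \<open>Uniform crossnorm: reasonable, and A \<otimes> B has norm \<le> |A||B| on (X \<otimes> Y, alpha).\<close>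
definition uniform_crossnorm :: "('a::banach \<Rightarrow> 'b::banach \<Rightarrow> 'c::banach) \<Rightarrow> bool" where
  "uniform_crossnorm tens \<longleftrightarrow> reasonable_crossnorm tens \<and>
     (\<forall>A B. bounded_linear A \<and> bounded_linear B \<longrightarrow>
        (\<forall>(I::nat set) x y. finite I \<longrightarrow>
           norm (\<Sum>i\<in>I. tens (A (x i)) (B (y i)))
             \<le> onorm A * onorm B * norm (\<Sum>i\<in>I. tens (x i) (y i))))"

end

theory Submission
  imports Defs
begin

text \<open>Approximate a point of U by a sum of tensors a i \<otimes> b i and a point of V by a sum of
  tensors c j \<otimes> e j with S-periodic b i and e j; this is possible since periodic points of S
  are dense and elementary tensors span a dense subspace.  Periodic vectors have bounded
  S-orbits and are S s-images of points of their own orbit, so it suffices to move the finitely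
  many first factors by T simultaneously: the a i to near 0 and suitable small vectors to near
  the c j.  A chaotic semigroup is weakly mixing, hence transitive on finite families of open
  pairs; starting from periodic points the common hitting times form a syndetic set, by a
  Dirichlet-type argument on the torus of the periods.\<close>

lemma uniform_boundedness:
  fixes A :: "nat \<Rightarrow> 'a::banach \<Rightarrow> 'b::real_normed_vector"
  assumes lin: "\<And>k. bounded_linear (A k)"
    and pointwise: "\<And>x. \<exists>B. \<forall>k. norm (A k x) \<le> B"
  shows "\<exists>M. \<forall>k x. norm (A k x) \<le> M * norm x"
proof -
  define F where "F n = {x. \<forall>k. norm (A k x) \<le> real n}" for n :: nat
  have closed_F: "closed (F n)" for n
  proof -
    have "F n = (\<Inter>k. {x. norm (A k x) \<le> real n})" by (auto simp: F_def)
    moreover have "closed {x. norm (A k x) \<le> real n}" for k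
      by (intro closed_Collect_le continuous_intros linear_continuous_on[OF lin])
    ultimately show ?thesis by auto
  qed
  have F_cover: "\<Union>(range F) = UNIV"
  proof safe
    fix x
    obtain B where "\<forall>k. norm (A k x) \<le> B" using pointwise by blast
    moreover obtain n :: nat where "B \<le> real n" using real_arch_simple by blast
    ultimately have "x \<in> F n" unfolding F_def by (auto intro: order_trans)
    then show "x \<in> \<Union>(range F)" by blast
  qed auto
  have "\<exists>n. interior (F n) \<noteq> {}"
  proof (rule ccontr)
    assume "\<not> ?thesis"
    then have "euclidean interior_of \<Union>(range F) = {}"
      by (intro Baire_category_alt) (auto simp: completely_metrizable_space_euclidean
            euclidean_interior_of closed_F closed_closedin[symmetric])
    then show False using F_cover by (simp add: euclidean_interior_of)
  qed
  then obtain n x0 r where r: "r > 0" "ball x0 r \<subseteq> F n"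
    by (meson mem_interior ex_in_conv)
  have small: "norm (A k y) \<le> 2 * real n" if "norm y < r" for k y
  proof -
    have "x0 + y \<in> F n" "x0 \<in> F n" using r that by (auto simp: dist_norm)
    then have "norm (A k (x0 + y)) \<le> real n" "norm (A k x0) \<le> real n" by (auto simp: F_def)
    moreover have "A k y = A k (x0 + y) - A k x0"
      using linear_add[OF bounded_linear.linear[OF lin]] by simp
    ultimately show ?thesis by (metis norm_triangle_ineq4 order_trans add_mono mult_2)
  qed
  have "norm (A k y) \<le> (4 * real n / r) * norm y" for k y
  proof (cases "y = 0")
    case True then show ?thesis using linear_0[OF bounded_linear.linear[OF lin]] by simp
  next
    case False
    define c where "c = r / (2 * norm y)"
    have c: "c > 0" using r False by (simp add: c_def)
    have "norm (c *\<^sub>R y) < r" using r False by (simp add: c_def)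
    then have "norm (A k (c *\<^sub>R y)) \<le> 2 * real n" by (rule small)
    moreover have "A k (c *\<^sub>R y) = c *\<^sub>R A k y"
      using linear_scale[OF bounded_linear.linear[OF lin]] by simp
    ultimately have "c * norm (A k y) \<le> 2 * real n" using c by simp
    then have "norm (A k y) \<le> 2 * real n / c" using c by (simp add: field_simps)
    also have "2 * real n / c = (4 * real n / r) * norm y" using r False by (simp add: c_def field_simps)
    finally show ?thesis .
  qed
  then show ?thesis by blast
qed

locale c0_semigroup =
  fixes T :: "real \<Rightarrow> 'a::banach \<Rightarrow> 'a"
  assumes strongly_continuous: "strongly_continuous_semigroup T"
begin

lemma bounded_linear_T: "t \<ge> 0 \<Longrightarrow> bounded_linear (T t)"
  using strongly_continuous by (simp add: strongly_continuous_semigroup_def)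

lemma T_0 [simp]: "T 0 x = x"
  using strongly_continuous by (simp add: strongly_continuous_semigroup_def)

lemma T_semigroup: "s \<ge> 0 \<Longrightarrow> t \<ge> 0 \<Longrightarrow> T (s + t) x = T s (T t x)"
  using strongly_continuous by (simp add: strongly_continuous_semigroup_def)

lemma T_commute: "s \<ge> 0 \<Longrightarrow> t \<ge> 0 \<Longrightarrow> T s (T t x) = T t (T s x)"
  using T_semigroup[of s t x] T_semigroup[of t s x] by (simp add: add.commute)

lemma T_add: "t \<ge> 0 \<Longrightarrow> T t (x + y) = T t x + T t y"
  using bounded_linear_T[of t] by (simp add: linear_add bounded_linear.linear)

lemma T_diff: "t \<ge> 0 \<Longrightarrow> T t (x - y) = T t x - T t y"
  using bounded_linear_T[of t] by (simp add: linear_diff bounded_linear.linear)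

lemma T_norm_bound:
  assumes "t \<ge> 0" shows "\<exists>K>0. \<forall>x. norm (T t x) \<le> K * norm x"
  using bounded_linear.pos_bounded[OF bounded_linear_T[OF assms]] by (metis mult.commute)

lemma open_vimage_T: "t \<ge> 0 \<Longrightarrow> open G \<Longrightarrow> open (T t -` G)"
  using bounded_linear_T linear_continuous_at continuous_open_vimage by blast

lemma T_near_identity:
  assumes "e > 0" shows "\<exists>d>0. \<forall>t. 0 \<le> t \<and> t < d \<longrightarrow> norm (T t x - x) < e"
proof -
  have "((\<lambda>t. T t x) \<longlongrightarrow> x) (at_right 0)"
    using strongly_continuous by (simp add: strongly_continuous_semigroup_def)
  then have "eventually (\<lambda>t. dist (T t x) x < e) (at_right (0::real))"
    using assms by (rule tendstoD)
  then obtain d where d: "d > 0" "\<forall>t>0. t < d \<longrightarrow> dist (T t x) x < e"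
    using eventually_at_right[of "0::real" 1] by auto
  show ?thesis
  proof (intro exI[of _ d] conjI allI impI)
    fix t assume "0 \<le> t \<and> t < d"
    then show "norm (T t x - x) < e"
      using d assms by (cases "t = 0") (auto simp: dist_norm)
  qed (use d in auto)
qed

text \<open>If the operators were unbounded on every interval [0, 1/(n+1)], the witnesses would
  form a pointwise bounded sequence of operators (by strong continuity at 0), contradicting
  the uniform boundedness principle.\<close>
lemma bounded_near_0: "\<exists>d>0. \<exists>M. \<forall>t x. 0 \<le> t \<and> t \<le> d \<longrightarrow> norm (T t x) \<le> M * norm x"
proof (rule ccontr)
  assume unbounded: "\<not> ?thesis"
  have "\<exists>t x. 0 \<le> t \<and> t \<le> 1 / (real n + 1) \<and> norm (T t x) > real n * norm x" for n :: nat
  proof -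
    have "1 / (real n + 1) > 0" by simp
    then have "\<not> (\<forall>t x. 0 \<le> t \<and> t \<le> 1 / (real n + 1) \<longrightarrow> norm (T t x) \<le> real n * norm x)"
      using unbounded by blast
    then show ?thesis by (auto simp: not_le)
  qed
  then obtain t x where tx: "\<And>n. 0 \<le> t n \<and> t n \<le> 1 / (real n + 1) \<and> norm (T (t n) (x n)) > real n * norm (x n)"
    by metis
  have "\<exists>M. \<forall>k y. norm (T (t k) y) \<le> M * norm y"
  proof (rule uniform_boundedness)
    show "bounded_linear (T (t k))" for k using tx bounded_linear_T by blast
    fix y
    obtain d where d: "d > 0" "\<forall>s. 0 \<le> s \<and> s < d \<longrightarrow> norm (T s y - y) < 1"
      using T_near_identity[of 1] by auto
    obtain N :: nat where N: "1 / d < real N" using reals_Archimedean2 by blast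
    have "norm (T (t k) y) \<le> norm y + 1 + (\<Sum>n<N. norm (T (t n) y))" for k
    proof (cases "k < N")
      case True
      then have "norm (T (t k) y) \<le> (\<Sum>n<N. norm (T (t n) y))" by (intro member_le_sum) auto
      then show ?thesis by (smt (verit) norm_ge_zero)
    next
      case False
      have "1 / d < real k + 1" using N False by simp
      then have "1 / (real k + 1) < d" using d by (simp add: field_simps)
      then have "t k < d" using tx[of k] by linarith
      then have "norm (T (t k) y - y) < 1" using d(2) tx[of k] by simp
      moreover have "0 \<le> (\<Sum>n<N. norm (T (t n) y))" by (simp add: sum_nonneg)
      ultimately show ?thesis using norm_triangle_sub[of "T (t k) y" y] by linarith
    qed
    then show "\<exists>B. \<forall>k. norm (T (t k) y) \<le> B" by blast
  qed
  then obtain M where M: "\<And>k y. norm (T (t k) y) \<le> M * norm y" by blast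
  obtain n :: nat where n: "M < real n" using reals_Archimedean2 by blast
  have "M * norm (x n) \<le> real n * norm (x n)" using n by (intro mult_right_mono) auto
  then show False using M[of n "x n"] tx[of n] by linarith
qed

lemma bounded_on_interval: "\<exists>M\<ge>1. \<forall>t x. 0 \<le> t \<and> t \<le> L \<longrightarrow> norm (T t x) \<le> M * norm x"
proof -
  obtain d M0 where d: "d > 0" and M0: "\<And>t x. 0 \<le> t \<and> t \<le> d \<Longrightarrow> norm (T t x) \<le> M0 * norm x"
    using bounded_near_0 by blast
  define M where "M = max 1 M0"
  have M1: "M \<ge> 1" by (simp add: M_def)
  have M: "norm (T t x) \<le> M * norm x" if "0 \<le> t" "t \<le> d" for t x
    using M0[of t x] that mult_right_mono[of M0 M "norm x"] by (simp add: M_def)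
  have power_bound: "\<forall>t x. 0 \<le> t \<and> t \<le> real k * d \<longrightarrow> norm (T t x) \<le> M ^ k * norm x" for k
  proof (induction k)
    case 0 then show ?case by auto
  next
    case (Suc k)
    show ?case
    proof (intro allI impI)
      fix t x assume t: "0 \<le> t \<and> t \<le> real (Suc k) * d"
      have Mk: "M ^ k \<ge> 1" using M1 by simp
      show "norm (T t x) \<le> M ^ Suc k * norm x"
      proof (cases "t \<le> d")
        case True
        then have "norm (T t x) \<le> M * norm x" using M t by blast
        also have "\<dots> \<le> M ^ Suc k * norm x"
          using Mk M1 by (intro mult_right_mono) (auto simp: mult_le_cancel_left1)
        finally show ?thesis .
      next
        case False
        have "T t x = T d (T (t - d) x)" using T_semigroup[of d "t - d"] False d by simp
        then have "norm (T t x) \<le> M * norm (T (t - d) x)" using M d by auto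
        also have "\<dots> \<le> M * (M ^ k * norm x)"
          using Suc.IH[rule_format, of "t - d" x] t False M1
          by (intro mult_left_mono) (auto simp: algebra_simps)
        finally show ?thesis by simp
      qed
    qed
  qed
  obtain k :: nat where "L / d \<le> real k" using real_arch_simple by blast
  then have "L \<le> real k * d" using d by (simp add: field_simps)
  then show ?thesis using power_bound[of k] M1 by (intro exI[of _ "M ^ k"]) auto
qed

lemma periodic_iterate:
  assumes "p \<ge> 0" "T p x = x" shows "T (real k * p) x = x"
proof (induction k)
  case (Suc k)
  have "T (real (Suc k) * p) x = T p (T (real k * p) x)"
    using T_semigroup[of p "real k * p" x] assms by (simp add: algebra_simps)
  then show ?case using Suc assms by simp
qed simp

lemma periodic_shift:
  assumes "p \<ge> 0" "T p x = x" "d \<ge> 0" shows "T (real k * p + d) x = T d x"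
  using T_semigroup[of d "real k * p" x] periodic_iterate[OF assms(1,2), of k] assms
  by (simp add: add.commute)

lemma periodic_orbit_bounded:
  assumes "p > 0" "T p x = x" shows "\<exists>B. \<forall>t\<ge>0. norm (T t x) \<le> B"
proof -
  obtain M where M: "\<And>t. 0 \<le> t \<Longrightarrow> t \<le> p \<Longrightarrow> norm (T t x) \<le> M * norm x"
    using bounded_on_interval[of p] by blast
  have "norm (T t x) \<le> M * norm x" if "t \<ge> 0" for t
  proof -
    define k where "k = nat \<lfloor>t / p\<rfloor>"
    have "real k * p \<le> t" "t < real k * p + p"
      using assms(1) that floor_divide_lower[of p t] floor_divide_upper[of p t]
      by (auto simp: k_def distrib_right)
    then have "T t x = T (t - real k * p) x"
      using periodic_shift[of p x "t - real k * p" k] assms by simp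
    then show ?thesis using M \<open>real k * p \<le> t\<close> \<open>t < real k * p + p\<close> by simp
  qed
  then show ?thesis by blast
qed

lemma periodic_orbits_bounded:
  assumes "\<forall>i<k. \<exists>p>0. T p (x i) = x i"
  shows "\<exists>B>0. \<forall>i<(k::nat). \<forall>t\<ge>0. norm (T t (x i)) \<le> B"
proof -
  have "\<exists>B. i < k \<longrightarrow> (\<forall>t\<ge>0. norm (T t (x i)) \<le> B)" for i
  proof (cases "i < k")
    case True
    then obtain p where "p > 0" "T p (x i) = x i" using assms by blast
    then show ?thesis using periodic_orbit_bounded by blast
  qed simp
  then obtain B where B: "\<And>i t. i < k \<Longrightarrow> t \<ge> 0 \<Longrightarrow> norm (T t (x i)) \<le> B i"
    by metis
  have "B i \<le> 1 + (\<Sum>j<k. \<bar>B j\<bar>)" if "i < k" for i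
  proof -
    have "\<bar>B i\<bar> \<le> (\<Sum>j<k. \<bar>B j\<bar>)" using that by (intro member_le_sum) auto
    then show ?thesis by linarith
  qed
  moreover have "0 < 1 + (\<Sum>j<k. \<bar>B j\<bar>)" by (simp add: add_pos_nonneg sum_nonneg)
  ultimately show ?thesis using B by (meson order_trans)
qed

lemma periodic_preimage:
  assumes "p > 0" "T p x = x" "s \<ge> 0" shows "\<exists>r\<ge>0. T s (T r x) = x"
proof -
  define k where "k = nat \<lceil>s / p\<rceil>"
  have "s \<le> real k * p"
    using assms by (simp add: k_def pos_divide_le_eq[symmetric])
  then have "T s (T (real k * p - s) x) = x"
    using T_semigroup[of s "real k * p - s" x] periodic_iterate[of p x k] assms by simp
  then show ?thesis using \<open>s \<le> real k * p\<close> by (intro exI[of _ "real k * p - s"]) auto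
qed

end

definition near_int :: "real \<Rightarrow> real \<Rightarrow> bool" where
  "near_int x r \<longleftrightarrow> (\<exists>m::int. \<bar>x - of_int m\<bar> < r)"

lemma near_int_diff: "near_int x r \<Longrightarrow> near_int y r' \<Longrightarrow> near_int (y - x) (r + r')"
proof -
  assume "near_int x r" "near_int y r'"
  then obtain m m' :: int where "\<bar>x - m\<bar> < r" "\<bar>y - m'\<bar> < r'" by (auto simp: near_int_def)
  then have "\<bar>(y - x) - of_int (m' - m)\<bar> < r + r'" unfolding abs_less_iff by auto
  then show ?thesis unfolding near_int_def by blast
qed

text \<open>The position of \<sigma> on the torus, i.e. the fractional parts of \<sigma> / q i for i < k,
  discretised into N^k boxes.\<close>
definition torus_box :: "nat \<Rightarrow> (nat \<Rightarrow> real) \<Rightarrow> nat \<Rightarrow> real \<Rightarrow> nat list" where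
  "torus_box N q k \<sigma> = map (\<lambda>i. nat \<lfloor>real N * frac (\<sigma> / q i)\<rfloor>) [0..<k]"

lemma finite_range_torus_box:
  assumes "N > 0" shows "finite (range (torus_box N q k))"
proof -
  have "torus_box N q k \<sigma> \<in> {xs. set xs \<subseteq> {..<N} \<and> length xs = k}" for \<sigma>
  proof -
    have "nat \<lfloor>real N * frac (\<sigma> / q i)\<rfloor> < N" for i
    proof -
      have "real N * frac (\<sigma> / q i) < real N" using frac_lt_1 assms by simp
      then show ?thesis by (simp add: floor_less_iff nat_less_iff)
    qed
    then show ?thesis by (auto simp: torus_box_def)
  qed
  then have "range (torus_box N q k) \<subseteq> {xs. set xs \<subseteq> {..<N} \<and> length xs = k}" by blast
  then show ?thesis by (rule finite_subset) (rule finite_lists_length_eq, simp)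
qed

lemma torus_box_eq_near_int:
  assumes "torus_box N q k a = torus_box N q k b" "i < k" "N > 0"
  shows "near_int ((a - b) / q i) (1 / real N)"
proof -
  have "nat \<lfloor>real N * frac (a / q i)\<rfloor> = nat \<lfloor>real N * frac (b / q i)\<rfloor>"
    using arg_cong[OF assms(1), of "\<lambda>xs. xs ! i"] assms(2) by (simp add: torus_box_def)
  then have "\<lfloor>real N * frac (a / q i)\<rfloor> = \<lfloor>real N * frac (b / q i)\<rfloor>"
    by (simp add: eq_nat_nat_iff)
  then have "\<bar>real N * frac (a / q i) - real N * frac (b / q i)\<bar> < 1"
    by (simp add: floor_eq_iff abs_less_iff) linarith
  then have "\<bar>frac (a / q i) - frac (b / q i)\<bar> < 1 / real N"
    using assms(3) by (simp add: right_diff_distrib[symmetric] abs_mult pos_less_divide_eq mult.commute)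
  moreover have "frac (a / q i) - frac (b / q i) = (a - b) / q i - of_int (\<lfloor>a / q i\<rfloor> - \<lfloor>b / q i\<rfloor>)"
    by (simp add: frac_def diff_divide_distrib)
  ultimately show ?thesis unfolding near_int_def by (intro exI[of _ "\<lfloor>a / q i\<rfloor> - \<lfloor>b / q i\<rfloor>"]) simp
qed

text \<open>Dirichlet's pigeonhole argument: among the multiples of H' two land in the same box.\<close>
lemma large_common_near_period:
  fixes q :: "nat \<Rightarrow> real" and k :: nat
  assumes "N > 0" shows "\<exists>d\<ge>H. \<forall>i<k. near_int (d / q i) (1 / real N)"
proof -
  define H' where "H' = \<bar>H\<bar> + 1"
  have H': "H' > 0" "H \<le> H'" by (auto simp: H'_def)
  define f where "f j = torus_box N q k (real j * H')" for j :: nat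
  have "range f \<subseteq> range (torus_box N q k)" by (auto simp: f_def)
  then have "finite (range f)" using finite_range_torus_box[OF assms] finite_subset by blast
  then have "\<not> inj f" using finite_imageD by blast
  then obtain a b where ab: "f a = f b" "a < b"
    unfolding inj_def by (metis linorder_neqE_nat)
  define d where "d = real b * H' - real a * H'"
  have "d = real (b - a) * H'" using ab by (simp add: d_def of_nat_diff left_diff_distrib)
  moreover have "real (b - a) \<ge> 1" using ab by simp
  ultimately have "d \<ge> H'" using H' by (simp add: mult_le_cancel_right1)
  moreover have "near_int (d / q i) (1 / real N)" if "i < k" for i
    using torus_box_eq_near_int[of N q k "real b * H'" "real a * H'" i] ab that assms
    by (simp add: f_def d_def)
  ultimately show ?thesis using H' by (intro exI[of _ d]) auto
qed

lemma near_multiple_of_period: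
  assumes q: "q > 0" and "\<sigma> \<ge> 0" and near: "near_int (\<sigma> / q) \<theta>" and "q * \<theta> \<le> \<eta>" "\<theta> < 1"
    and "2 * \<eta> < \<delta>"
  shows "\<exists>m::nat. real m * q \<le> \<sigma> + \<eta> \<and> \<sigma> + \<eta> < real m * q + \<delta>"
proof -
  obtain m :: int where m: "\<bar>\<sigma> / q - of_int m\<bar> < \<theta>" using near by (auto simp: near_int_def)
  have "\<bar>\<sigma> - of_int m * q\<bar> = q * \<bar>\<sigma> / q - of_int m\<bar>"
    using q by (simp add: abs_mult[symmetric] field_simps)
  also have "\<dots> \<le> q * \<theta>" using m q by (intro mult_left_mono) auto
  finally have close: "\<bar>\<sigma> - of_int m * q\<bar> \<le> q * \<theta>" .
  have "q * \<theta> < q" using q \<open>\<theta> < 1\<close> by simp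
  have "m \<ge> 0"
  proof (rule ccontr)
    assume "\<not> m \<ge> 0"
    then have "of_int m \<le> (-1::real)" by simp
    then have "of_int m * q \<le> - q" using q by (metis mult_minus1 mult_right_mono less_imp_le)
    then show False using close \<open>\<sigma> \<ge> 0\<close> \<open>q * \<theta> < q\<close> by (simp add: abs_le_iff)
  qed
  then show ?thesis using close assms(4,6) unfolding abs_le_iff
    by (intro exI[of _ "nat m"]) simp
qed

text \<open>Bohr almost periodicity of the torus flow: the times lying just after a common multiple
  of finitely many periods form a syndetic set.  Representatives \<tau> of all boxes are shifted
  by large common near periods; for a given t one picks the representative of the box of -t.\<close>
lemma syndetic_near_multiples:
  fixes q :: "nat \<Rightarrow> real"
  assumes q: "\<And>i. i < k \<Longrightarrow> q i > 0" and \<delta>: "\<delta> > 0"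
  shows "\<exists>L\<ge>0. \<forall>t\<ge>0. \<exists>\<sigma>\<in>{t..t + L}.
            \<forall>i<k. \<exists>m::nat. real m * q i \<le> \<sigma> \<and> \<sigma> < real m * q i + \<delta>"
proof -
  define Q where "Q = 1 + (\<Sum>i<k. q i)"
  have Qq: "q i \<le> Q" if "i < k" for i
  proof -
    have "q i \<le> (\<Sum>i<k. q i)" using that q by (intro member_le_sum) (auto intro: less_imp_le)
    then show ?thesis by (simp add: Q_def)
  qed
  have "0 \<le> (\<Sum>i<k. q i)" using q by (intro sum_nonneg) (auto intro: less_imp_le)
  then have Q: "Q > 0" by (simp add: Q_def)
  obtain N :: nat where N: "max 3 (4 * Q / \<delta>) < real N" using reals_Archimedean2 by blast
  then have N3: "real N > 3" and N0: "N > 0" by auto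
  have "4 * Q / \<delta> < real N" using N by simp
  then have QN: "4 * Q / real N < \<delta>" using \<delta> N3 by (simp add: field_simps)
  define boxes where "boxes = range (torus_box N q k)"
  have "finite boxes" using finite_range_torus_box[OF N0] by (simp add: boxes_def)
  obtain \<tau> where \<tau>: "\<And>\<gamma>. \<gamma> \<in> boxes \<Longrightarrow> torus_box N q k (\<tau> \<gamma>) = \<gamma>"
    unfolding boxes_def by (metis f_inv_into_f)
  have "\<forall>\<gamma>. \<exists>d. d \<ge> \<bar>\<tau> \<gamma>\<bar> \<and> (\<forall>i<k. near_int (d / q i) (1 / real N))"
    using large_common_near_period[OF N0] by blast
  then obtain d where d: "\<And>\<gamma>. d \<gamma> \<ge> \<bar>\<tau> \<gamma>\<bar>" "\<And>\<gamma> i. i < k \<Longrightarrow> near_int (d \<gamma> / q i) (1 / real N)"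
    by metis
  have shift_nonneg: "\<tau> \<gamma> + d \<gamma> \<ge> 0" for \<gamma> using d(1)[of \<gamma>] by linarith
  define \<eta> where "\<eta> = 2 * Q / real N"
  have \<eta>: "\<eta> \<ge> 0" "2 * \<eta> < \<delta>" using Q N0 QN by (auto simp: \<eta>_def)
  define L where "L = (\<Sum>\<gamma>\<in>boxes. \<tau> \<gamma> + d \<gamma>) + \<eta>"
  have shift_le: "\<tau> \<gamma> + d \<gamma> + \<eta> \<le> L" if "\<gamma> \<in> boxes" for \<gamma>
    unfolding L_def using \<open>finite boxes\<close> that shift_nonneg
    by (simp add: member_le_sum[of \<gamma> boxes "\<lambda>\<gamma>. \<tau> \<gamma> + d \<gamma>"])
  have "\<exists>\<sigma>\<in>{t..t + L}. \<forall>i<k. \<exists>m::nat. real m * q i \<le> \<sigma> \<and> \<sigma> < real m * q i + \<delta>"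
    if t: "t \<ge> 0" for t
  proof -
    define \<gamma> where "\<gamma> = torus_box N q k (- t)"
    have "\<gamma> \<in> boxes" by (simp add: \<gamma>_def boxes_def)
    define \<sigma> where "\<sigma> = t + \<tau> \<gamma> + d \<gamma>"
    have "\<exists>m::nat. real m * q i \<le> \<sigma> + \<eta> \<and> \<sigma> + \<eta> < real m * q i + \<delta>" if i: "i < k" for i
    proof (rule near_multiple_of_period)
      have "near_int ((- t - \<tau> \<gamma>) / q i) (1 / real N)"
        using torus_box_eq_near_int[of N q k "- t" "\<tau> \<gamma>" i] \<tau>[OF \<open>\<gamma> \<in> boxes\<close>] i N0
        by (simp add: \<gamma>_def)
      from near_int_diff[OF this d(2)[OF i]]
      have "near_int (d \<gamma> / q i - (- t - \<tau> \<gamma>) / q i) (2 / real N)" by simp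
      moreover have "d \<gamma> / q i - (- t - \<tau> \<gamma>) / q i = \<sigma> / q i"
        using q[OF i] by (simp add: \<sigma>_def field_simps)
      ultimately show "near_int (\<sigma> / q i) (2 / real N)" by simp
      show "q i * (2 / real N) \<le> \<eta>"
        using Qq[OF i] N0 mult_right_mono[of "q i" Q "2 / real N"] by (simp add: \<eta>_def mult.commute)
    qed (use q i t shift_nonneg N3 \<eta> in \<open>auto simp: \<sigma>_def add.assoc\<close>)
    then show ?thesis
      using shift_le[OF \<open>\<gamma> \<in> boxes\<close>] shift_nonneg[of \<gamma>] \<eta>
      by (intro bexI[of _ "\<sigma> + \<eta>"]) (auto simp: \<sigma>_def)
  qed
  moreover have "L \<ge> 0"
    unfolding L_def using \<eta> shift_nonneg by (simp add: sum_nonneg)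
  ultimately show ?thesis by blast
qed

locale chaotic_c0_semigroup = c0_semigroup +
  assumes chaotic: "chaotic_sg T"
begin

lemma periodic_points_dense:
  assumes "open G" "G \<noteq> {}" shows "\<exists>x\<in>G. \<exists>p>0. T p x = x"
proof -
  have "closure {z. \<exists>t>0. T t z = z} = UNIV" using chaotic by (simp add: chaotic_sg_def)
  then show ?thesis using open_Int_closure_eq_empty[OF assms(1)] assms(2) by blast
qed

lemma topologically_transitive:
  assumes "open O1" "O1 \<noteq> {}" "open O2" "O2 \<noteq> {}"
  shows "\<exists>s\<ge>0. \<exists>x\<in>O1. T s x \<in> O2"
proof -
  obtain h where "closure {T t h | t. t \<ge> 0} = UNIV"
    using chaotic by (auto simp: chaotic_sg_def hypercyclic_sg_def)
  then have orbit_meets: "\<exists>t\<ge>0. T t h \<in> G" if "open G" "G \<noteq> {}" for G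
    using open_Int_closure_eq_empty[OF that(1)] that(2) by blast
  obtain \<tau> where \<tau>: "\<tau> \<ge> 0" "T \<tau> h \<in> O1" using orbit_meets assms(1,2) by blast
  obtain p q where pq: "p \<in> O2" "q > 0" "T q p = p" using periodic_points_dense[OF assms(3,4)] by blast
  obtain r where "r \<ge> 0" "T \<tau> (T r p) = p" using periodic_preimage[OF pq(2,3) \<tau>(1)] by blast
  then have "T r p \<in> T \<tau> -` O2" using pq by simp
  then obtain t where t: "t \<ge> 0" "T t h \<in> T \<tau> -` O2"
    using orbit_meets open_vimage_T[OF \<tau>(1) assms(3)] by blast
  have "T t (T \<tau> h) = T \<tau> (T t h)" using T_commute \<tau> t by blast
  then show ?thesis using t \<tau> by (intro exI[of _ t] conjI bexI[of _ "T \<tau> h"]) auto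
qed

text \<open>Take a periodic x in U whose image at time n0 lies in V, and y near x with T n y near 0.
  At a multiple s \<ge> n of the period of x, T s y is still small by local boundedness, so at
  time n0 + s the point y \<in> U is mapped near 0 and the small vector x - y is mapped
  near T n0 x \<in> V.\<close>
lemma transitive_via_small_vectors:
  assumes "open U" "U \<noteq> {}" "open V" "V \<noteq> {}" "\<epsilon> > 0"
  shows "\<exists>s\<ge>0. (\<exists>x\<in>U. norm (T s x) < \<epsilon>) \<and> (\<exists>w. norm w < \<epsilon> \<and> T s w \<in> V)"
proof -
  obtain n0 x0 where n0: "n0 \<ge> 0" "x0 \<in> U" "T n0 x0 \<in> V"
    using topologically_transitive[OF assms(1-4)] by blast
  define U1 where "U1 = U \<inter> T n0 -` V"
  have "open U1" unfolding U1_def using open_vimage_T[OF n0(1) assms(3)] assms(1) by blast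
  moreover have "x0 \<in> U1" using n0 by (simp add: U1_def)
  ultimately obtain x p where xp: "x \<in> U1" "p > 0" "T p x = x"
    using periodic_points_dense by blast
  obtain \<rho> where \<rho>: "\<rho> > 0" "ball x \<rho> \<subseteq> U1" using \<open>open U1\<close> xp(1) open_contains_ball by blast
  obtain K where K: "K > 0" "\<And>z. norm (T n0 z) \<le> K * norm z" using T_norm_bound[OF n0(1)] by blast
  obtain M where M: "M \<ge> 1" "\<And>t z. 0 \<le> t \<and> t \<le> p \<Longrightarrow> norm (T t z) \<le> M * norm z"
    using bounded_on_interval[of p] by blast
  obtain \<eta> where \<eta>: "\<eta> > 0" "\<eta> \<le> \<epsilon>" "M * \<eta> < \<rho>" "K * (M * \<eta>) < \<epsilon>"
  proof
    define \<eta> where "\<eta> = min \<epsilon> (min (\<rho> / (2 * M)) (\<epsilon> / (2 * K * M)))"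
    show "\<eta> > 0" "\<eta> \<le> \<epsilon>" using assms \<rho> M K by (auto simp: \<eta>_def)
    have "\<eta> \<le> \<rho> / (2 * M)" "\<eta> \<le> \<epsilon> / (2 * K * M)" by (simp_all add: \<eta>_def)
    then have "M * \<eta> \<le> M * (\<rho> / (2 * M))" "K * M * \<eta> \<le> K * M * (\<epsilon> / (2 * K * M))"
      using M K by (meson mult_left_mono mult_nonneg_nonneg less_imp_le order_trans zero_le_one)+
    then have half: "M * \<eta> \<le> \<rho> / 2" "K * (M * \<eta>) \<le> \<epsilon> / 2"
      using M K by (simp_all add: mult.assoc)
    show "M * \<eta> < \<rho>" using half(1) \<rho> by simp
    show "K * (M * \<eta>) < \<epsilon>" using half(2) assms by simp
  qed
  obtain n y where ny: "n \<ge> 0" "y \<in> ball x \<eta>" "T n y \<in> ball 0 \<eta>"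
    using topologically_transitive[of "ball x \<eta>" "ball 0 \<eta>"] \<eta> by auto
  define s where "s = real (nat \<lceil>n / p\<rceil>) * p"
  have s: "n \<le> s" "s \<le> n + p"
    using xp(2) ny(1) ceiling_divide_upper[of p n] ceiling_divide_lower[of p n]
    by (auto simp: s_def left_diff_distrib)
  have "T s y = T (s - n) (T n y)" using T_semigroup[of "s - n" n y] s ny(1) by simp
  then have "norm (T s y) \<le> M * norm (T n y)" using M(2)[of "s - n"] s by simp
  also have "\<dots> \<le> M * \<eta>" using ny(3) M by (intro mult_left_mono) auto
  finally have Tsy: "norm (T s y) \<le> M * \<eta>" .
  have Tsx: "T s x = x" unfolding s_def using periodic_iterate xp by simp
  have "s \<ge> 0" using s ny(1) by simp
  show ?thesis
  proof (intro exI[of _ "n0 + s"] conjI)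
    show "n0 + s \<ge> 0" using n0 \<open>s \<ge> 0\<close> by simp
    have "norm (T (n0 + s) y) \<le> K * norm (T s y)" using T_semigroup n0 \<open>s \<ge> 0\<close> K by simp
    also have "\<dots> \<le> K * (M * \<eta>)" using Tsy K by (intro mult_left_mono) auto
    finally have "norm (T (n0 + s) y) < \<epsilon>" using \<eta> by simp
    moreover have "y \<in> U1" using ny(2) \<eta> \<rho> M
      by (smt (verit, best) mem_ball mult_le_cancel_right1 subset_iff)
    ultimately show "\<exists>x\<in>U. norm (T (n0 + s) x) < \<epsilon>" by (auto simp: U1_def)
    have "norm (x - y) < \<epsilon>" using ny(2) \<eta> by (simp add: dist_norm)
    moreover have "T (n0 + s) (x - y) = T n0 (x - T s y)"
      using T_semigroup[of n0 s] n0 \<open>s \<ge> 0\<close> T_diff[of s x y] Tsx by simp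
    moreover have "x - T s y \<in> U1" using Tsy \<eta> \<rho> by (auto simp: dist_norm)
    ultimately show "\<exists>w. norm w < \<epsilon> \<and> T (n0 + s) w \<in> V" by (auto simp: U1_def)
  qed
qed

text \<open>With T k u \<in> U2 and T l v \<in> V2, a vector y near u with T s y small and a
  small w with T s w near v give the point y + w \<in> U1 and its partner T k y + T l w \<in> U2.\<close>
lemma weakly_mixing:
  assumes "open U1" "U1 \<noteq> {}" "open U2" "U2 \<noteq> {}" "open V1" "V1 \<noteq> {}" "open V2" "V2 \<noteq> {}"
  shows "\<exists>s\<ge>0. \<exists>x1 x2. x1 \<in> U1 \<and> x2 \<in> U2 \<and> T s x1 \<in> V1 \<and> T s x2 \<in> V2"
proof -
  obtain k u where ku: "k \<ge> 0" "u \<in> U1" "T k u \<in> U2"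
    using topologically_transitive[OF assms(1-4)] by blast
  obtain l v where lv: "l \<ge> 0" "v \<in> V1" "T l v \<in> V2"
    using topologically_transitive[OF assms(5-8)] by blast
  obtain a where a: "a > 0" "ball u a \<subseteq> U1" using assms(1) ku open_contains_ball by blast
  obtain b where b: "b > 0" "ball (T k u) b \<subseteq> U2" using assms(3) ku open_contains_ball by blast
  obtain c where c: "c > 0" "ball v c \<subseteq> V1" using assms(5) lv open_contains_ball by blast
  obtain d where d: "d > 0" "ball (T l v) d \<subseteq> V2" using assms(7) lv open_contains_ball by blast
  obtain Kk where Kk: "Kk > 0" "\<And>z. norm (T k z) \<le> Kk * norm z" using T_norm_bound[OF ku(1)] by blast
  obtain Kl where Kl: "Kl > 0" "\<And>z. norm (T l z) \<le> Kl * norm z" using T_norm_bound[OF lv(1)] by blast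
  define K where "K = 1 + Kk + Kl"
  have K: "K \<ge> 1" "Kk \<le> K" "Kl \<le> K" using Kk Kl by (auto simp: K_def)
  define \<mu> where "\<mu> = min (min a b) (min c d)"
  have \<mu>: "\<mu> > 0" "\<mu> \<le> a" "\<mu> \<le> b" "\<mu> \<le> c" "\<mu> \<le> d" using a b c d by (auto simp: \<mu>_def)
  define e where "e = \<mu> / (2 * K)"
  have "K * e = \<mu> / 2" "e > 0" using K \<mu> by (auto simp: e_def)
  moreover have "e \<le> K * e" using K \<open>e > 0\<close> by simp
  ultimately have e: "e > 0" "e \<le> a / 2" "e \<le> c / 2" "K * e \<le> b / 2" "K * e \<le> d / 2"
    using \<mu> by linarith+
  have Ke: "Kk * e \<le> K * e" "Kl * e \<le> K * e" using K e by (simp_all add: mult_right_mono)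
  obtain s y w where sw: "s \<ge> 0" "y \<in> ball u e" "norm (T s y) < e" "norm w < e" "T s w \<in> ball v e"
    using transitive_via_small_vectors[of "ball u e" "ball v e" e] e by auto
  have ny: "norm (y - u) < e" "norm (T s w - v) < e"
    using sw by (auto simp: dist_norm norm_minus_commute)
  have "norm (y + w - u) < a"
    using norm_triangle_ineq[of "y - u" w] ny sw e by (simp add: algebra_simps)
  then have "y + w \<in> U1" using a by (auto simp: dist_norm norm_minus_commute)
  moreover have "norm (T k y + T l w - T k u) < b"
  proof -
    have "T k y + T l w - T k u = T k (y - u) + T l w" using T_diff ku by simp
    then have "norm (T k y + T l w - T k u) \<le> Kk * norm (y - u) + Kl * norm w"
      using order_trans[OF norm_triangle_ineq add_mono[OF Kk(2) Kl(2)]] by metis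
    also have "\<dots> < Kk * e + Kl * e" using ny sw Kk Kl by (intro add_strict_mono) auto
    finally show ?thesis using Ke e by linarith
  qed
  then have "T k y + T l w \<in> U2" using b by (auto simp: dist_norm norm_minus_commute)
  moreover have "norm (T s (y + w) - v) < c"
  proof -
    have "T s (y + w) - v = T s y + (T s w - v)" using T_add sw by simp
    then have "norm (T s (y + w) - v) \<le> norm (T s y) + norm (T s w - v)"
      by (metis norm_triangle_ineq)
    then show ?thesis using sw ny e by linarith
  qed
  then have "T s (y + w) \<in> V1" using c by (auto simp: dist_norm norm_minus_commute)
  moreover have "norm (T s (T k y + T l w) - T l v) < d"
  proof -
    have "T s (T k y + T l w) - T l v = T k (T s y) + T l (T s w - v)"
      using T_add[of s] T_diff[of l] T_commute[of s k] T_commute[of s l] sw ku lv by simp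
    then have "norm (T s (T k y + T l w) - T l v) \<le> Kk * norm (T s y) + Kl * norm (T s w - v)"
      using order_trans[OF norm_triangle_ineq add_mono[OF Kk(2) Kl(2)]] by metis
    also have "\<dots> < Kk * e + Kl * e" using ny sw Kk Kl by (intro add_strict_mono) auto
    finally show ?thesis using Ke e by linarith
  qed
  then have "T s (T k y + T l w) \<in> V2" using d by (auto simp: dist_norm norm_minus_commute)
  ultimately show ?thesis using sw(1) by blast
qed

text \<open>By weak mixing, the first pair can absorb the last one: hitting U 0 \<inter> T n -` U k and
  V 0 \<inter> T n -` V k at time s, the point T n (x 0) serves the last pair.\<close>
lemma transitive_finite_family:
  "(\<forall>i<(k::nat). open (U i) \<and> U i \<noteq> {} \<and> open (V i) \<and> V i \<noteq> {}) \<Longrightarrow>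
    \<exists>s\<ge>0. \<exists>x. \<forall>i<k. x i \<in> U i \<and> T s (x i) \<in> V i"
proof (induction k arbitrary: U V)
  case 0 show ?case by auto
next
  case (Suc k)
  have first_last: "open (U 0)" "U 0 \<noteq> {}" "open (V 0)" "V 0 \<noteq> {}"
    "open (U k)" "U k \<noteq> {}" "open (V k)" "V k \<noteq> {}"
    using Suc.prems by auto
  show ?case
  proof (cases "k = 0")
    case True
    then obtain s x where "s \<ge> 0" "x \<in> U 0" "T s x \<in> V 0"
      using topologically_transitive first_last by blast
    then show ?thesis using True by (intro exI[of _ s] conjI exI[of _ "\<lambda>_. x"]) auto
  next
    case False
    obtain n x1 x2 where n: "n \<ge> 0" "x1 \<in> U 0" "x2 \<in> V 0" "T n x1 \<in> U k" "T n x2 \<in> V k"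
      using weakly_mixing[OF first_last] by blast
    define U' where "U' = U(0 := U 0 \<inter> T n -` U k)"
    define V' where "V' = V(0 := V 0 \<inter> T n -` V k)"
    have "open (U' i) \<and> U' i \<noteq> {} \<and> open (V' i) \<and> V' i \<noteq> {}" if "i < k" for i
    proof (cases "i = 0")
      case True
      then show ?thesis using n first_last open_vimage_T[OF n(1)] by (auto simp: U'_def V'_def)
    next
      case False
      then show ?thesis using Suc.prems \<open>i < k\<close> by (simp add: U'_def V'_def)
    qed
    then obtain s x where s: "s \<ge> 0" and x: "\<forall>i<k. x i \<in> U' i \<and> T s (x i) \<in> V' i"
      using Suc.IH[of U' V'] by blast
    have x0: "x 0 \<in> U 0" "T n (x 0) \<in> U k" "T s (x 0) \<in> V 0" "T n (T s (x 0)) \<in> V k"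
      using x False by (auto simp: U'_def V'_def)
    have "\<forall>i<Suc k. (x(k := T n (x 0))) i \<in> U i \<and> T s ((x(k := T n (x 0))) i) \<in> V i"
    proof (intro allI impI)
      fix i assume "i < Suc k"
      then consider "i = k" | "i = 0" | "0 < i" "i < k" by linarith
      then show "(x(k := T n (x 0))) i \<in> U i \<and> T s ((x(k := T n (x 0))) i) \<in> V i"
      proof cases
        case 1 then show ?thesis using x0 T_commute[OF s n(1)] by simp
      next
        case 2 then show ?thesis using x0 False by simp
      next
        case 3 then show ?thesis using x by (auto simp: U'_def V'_def)
      qed
    qed
    then show ?thesis using s by blast
  qed
qed

text \<open>Hitting all pairs at a time s0 via periodic points p i, the hitting times are syndetic
  because T (s0 + \<sigma>) (p i) stays near T s0 (p i) whenever \<sigma> is just beyond a multiple of every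
  period.\<close>
lemma syndetic_transitive_finite_family:
  assumes "\<forall>i<(k::nat). open (U i) \<and> U i \<noteq> {} \<and> open (V i) \<and> V i \<noteq> {}"
  shows "\<exists>L\<ge>0. \<forall>t\<ge>0. \<exists>s\<in>{t..t + L}. \<exists>x. \<forall>i<k. x i \<in> U i \<and> T s (x i) \<in> V i"
proof -
  obtain s0 x0 where s0: "s0 \<ge> 0" "\<forall>i<k. x0 i \<in> U i \<and> T s0 (x0 i) \<in> V i"
    using transitive_finite_family[OF assms] by blast
  have "\<exists>p q. p \<in> U i \<inter> T s0 -` V i \<and> q > 0 \<and> T q p = p" if i: "i < k" for i
  proof -
    have "open (U i \<inter> T s0 -` V i)" using assms i open_vimage_T[OF s0(1)] by blast
    moreover have "x0 i \<in> U i \<inter> T s0 -` V i" using s0 i by simp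
    ultimately show ?thesis using periodic_points_dense by blast
  qed
  then have "\<forall>i. \<exists>p q. i < k \<longrightarrow> p \<in> U i \<and> T s0 p \<in> V i \<and> q > 0 \<and> T q p = p" by auto
  then obtain p q where pq: "\<And>i. i < k \<Longrightarrow> p i \<in> U i \<and> T s0 (p i) \<in> V i \<and> q i > 0 \<and> T (q i) (p i) = p i"
    by metis
  obtain K where K: "K > 0" "\<And>z. norm (T s0 z) \<le> K * norm z" using T_norm_bound[OF s0(1)] by blast
  have "\<exists>r>0. ball (T s0 (p i)) r \<subseteq> V i" if i: "i < k" for i
    using pq[OF i] assms i open_contains_ball by auto
  then obtain r where r: "\<And>i. i < k \<Longrightarrow> r i > 0 \<and> ball (T s0 (p i)) (r i) \<subseteq> V i" by metis
  have "\<exists>d>0. \<forall>t. 0 \<le> t \<and> t < d \<longrightarrow> norm (T t (p i) - p i) < r i / K" if i: "i < k" for i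
    using T_near_identity[of "r i / K" "p i"] r[OF i] K by auto
  then obtain d where d: "\<And>i. i < k \<Longrightarrow> d i > 0 \<and> (\<forall>t. 0 \<le> t \<and> t < d i \<longrightarrow> norm (T t (p i) - p i) < r i / K)"
    by metis
  define \<delta> where "\<delta> = Min (insert 1 (d ` {..<k}))"
  have \<delta>: "\<delta> > 0" "\<And>i. i < k \<Longrightarrow> \<delta> \<le> d i" using d by (auto simp: \<delta>_def)
  obtain L where L: "L \<ge> 0" "\<forall>t\<ge>0. \<exists>\<sigma>\<in>{t..t + L}.
            \<forall>i<k. \<exists>m::nat. real m * q i \<le> \<sigma> \<and> \<sigma> < real m * q i + \<delta>"
    using syndetic_near_multiples[of k q \<delta>] pq \<delta>(1) by blast
  have "\<exists>s\<in>{t..t + (L + s0)}. \<exists>x. \<forall>i<k. x i \<in> U i \<and> T s (x i) \<in> V i" if t: "t \<ge> 0" for t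
  proof -
    obtain \<sigma> where \<sigma>: "\<sigma> \<in> {t..t + L}" "\<forall>i<k. \<exists>m::nat. real m * q i \<le> \<sigma> \<and> \<sigma> < real m * q i + \<delta>"
      using L t by blast
    have "T (s0 + \<sigma>) (p i) \<in> V i" if i: "i < k" for i
    proof -
      obtain m :: nat where m: "real m * q i \<le> \<sigma>" "\<sigma> < real m * q i + \<delta>" using \<sigma> i by blast
      define e where "e = \<sigma> - real m * q i"
      have e: "0 \<le> e" "e < d i" using m \<delta>(2)[OF i] by (auto simp: e_def)
      have "T \<sigma> (p i) = T e (p i)"
        using periodic_shift[of "q i" "p i" e m] pq[OF i] e by (simp add: e_def)
      then have "T (s0 + \<sigma>) (p i) - T s0 (p i) = T s0 (T e (p i) - p i)"
        using T_semigroup[of s0 \<sigma>] T_diff s0 \<sigma> t by simp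
      then have "norm (T (s0 + \<sigma>) (p i) - T s0 (p i)) \<le> K * norm (T e (p i) - p i)" using K by simp
      also have "\<dots> < K * (r i / K)" using d[OF i] e K by (intro mult_strict_left_mono) auto
      finally have "T (s0 + \<sigma>) (p i) \<in> ball (T s0 (p i)) (r i)"
        using K by (simp add: dist_norm norm_minus_commute)
      then show ?thesis using r[OF i] by auto
    qed
    then show ?thesis using pq \<sigma> s0 by (intro bexI[of _ "s0 + \<sigma>"] exI[of _ p]) auto
  qed
  then show ?thesis using L s0 by (intro exI[of _ "L + s0"]) auto
qed

end

locale crossnormed_tensor =
  fixes tens :: "'a::banach \<Rightarrow> 'b::banach \<Rightarrow> 'c::banach"
  assumes completion: "tensor_completion tens" and uniform: "uniform_crossnorm tens"
begin

lemma linear_tens_left: "linear (\<lambda>x. tens x y)"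
  using completion by (simp add: tensor_completion_def)

lemma linear_tens_right: "linear (\<lambda>y. tens x y)"
  using completion by (simp add: tensor_completion_def)

lemma tens_diff_left: "tens (x - x') y = tens x y - tens x' y"
  using linear_diff[OF linear_tens_left] by simp

lemma tens_scaleR_left: "tens (c *\<^sub>R x) y = c *\<^sub>R tens x y"
  using linear_scale[OF linear_tens_left] by simp

lemma tens_diff_right: "tens x (y - y') = tens x y - tens x y'"
  using linear_diff[OF linear_tens_right] by simp

lemma norm_tens: "norm (tens x y) = norm x * norm y"
  using uniform by (simp add: uniform_crossnorm_def reasonable_crossnorm_def)

lemma norm_sum_tens_le:
  assumes "\<And>i. i < k \<Longrightarrow> norm (f i) \<le> e" "\<And>i. i < k \<Longrightarrow> norm (g i) \<le> B"
  shows "norm (\<Sum>i<(k::nat). tens (f i) (g i)) \<le> real k * e * B"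
proof -
  have "norm (\<Sum>i<k. tens (f i) (g i)) \<le> (\<Sum>i<k. norm (tens (f i) (g i)))" by (rule norm_sum)
  also have "\<dots> \<le> (\<Sum>i<k. e * B)"
  proof (rule sum_mono)
    fix i assume "i \<in> {..<k}"
    then have "norm (f i) \<le> e" "norm (g i) \<le> B" using assms by auto
    then show "norm (tens (f i) (g i)) \<le> e * B"
      unfolding norm_tens by (meson mult_mono norm_ge_zero order_trans)
  qed
  finally show ?thesis by simp
qed

lemma span_tens_eq_sum:
  assumes "z \<in> span (range (\<lambda>(x, y). tens x y))"
  shows "\<exists>(m::nat) a b. z = (\<Sum>i<m. tens (a i) (b i))"
  using assms
proof (induction rule: span_induct_alt)
  case base
  show ?case by (intro exI[of _ "0::nat"]) simp
next
  case (step c z' z)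
  obtain x y where "z' = tens x y" using step.hyps(1) by auto
  obtain m a b where z: "z = (\<Sum>i<(m::nat). tens (a i) (b i))" using step.IH by blast
  have "c *\<^sub>R z' + z = (\<Sum>i<Suc m. tens ((a(m := c *\<^sub>R x)) i) ((b(m := y)) i))"
    using \<open>z' = tens x y\<close> z by (simp add: tens_scaleR_left)
  then show ?case by blast
qed

lemma approx_by_sum_tens:
  assumes dense: "\<And>y r. r > 0 \<Longrightarrow> \<exists>b\<in>ball y r. P b" and "\<epsilon> > 0"
  shows "\<exists>(m::nat) a b. (\<forall>i<m. P (b i)) \<and> norm (z - (\<Sum>i<m. tens (a i) (b i))) < \<epsilon>"
proof -
  have "z \<in> closure (span (range (\<lambda>(x, y). tens x y)))"
    using completion by (simp add: tensor_completion_def)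
  then obtain z' where z': "z' \<in> span (range (\<lambda>(x, y). tens x y))" "dist z z' < \<epsilon> / 2"
    using closure_approachableD[of z _ "\<epsilon> / 2"] \<open>\<epsilon> > 0\<close> by auto
  obtain m a b' where z'_eq: "z' = (\<Sum>i<(m::nat). tens (a i) (b' i))" using span_tens_eq_sum[OF z'(1)] by blast
  define \<eta> where "\<eta> i = \<epsilon> / (2 * (real m + 1) * (norm (a i) + 1))" for i
  have "\<eta> i > 0" for i using \<open>\<epsilon> > 0\<close> by (simp add: \<eta>_def add_nonneg_pos)
  then have "\<forall>i. \<exists>b. b \<in> ball (b' i) (\<eta> i) \<and> P b" using dense by blast
  then obtain b where b: "\<And>i. b i \<in> ball (b' i) (\<eta> i) \<and> P (b i)" by metis
  have term_bound: "norm (tens (a i) (b' i - b i)) \<le> \<epsilon> / (2 * (real m + 1))" for i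
  proof -
    have "norm (tens (a i) (b' i - b i)) \<le> (norm (a i) + 1) * \<eta> i"
      using b[of i] by (simp add: norm_tens dist_norm mult_mono less_imp_le)
    also have "\<dots> = \<epsilon> / (2 * (real m + 1))"
      using add_nonneg_pos[OF norm_ge_zero[of "a i"] zero_less_one] by (simp add: \<eta>_def)
    finally show ?thesis .
  qed
  have "z' - (\<Sum>i<m. tens (a i) (b i)) = (\<Sum>i<m. tens (a i) (b' i - b i))"
    unfolding z'_eq by (simp add: tens_diff_right sum_subtractf)
  then have "norm (z' - (\<Sum>i<m. tens (a i) (b i))) \<le> (\<Sum>i<m. norm (tens (a i) (b' i - b i)))"
    by (simp add: norm_sum)
  also have "\<dots> \<le> real m * (\<epsilon> / (2 * (real m + 1)))"
    using sum_mono[of "{..<m}", OF term_bound] by simp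
  also have "\<dots> < \<epsilon> / 2" using \<open>\<epsilon> > 0\<close> by (simp add: field_simps)
  finally have "norm (z - (\<Sum>i<m. tens (a i) (b i))) < \<epsilon>"
    using z'(2) norm_triangle_lt[of "z - z'" "z' - (\<Sum>i<m. tens (a i) (b i))"] by (simp add: dist_norm)
  then show ?thesis using b by blast
qed

end

locale tensor_product_semigroup =
  T: chaotic_c0_semigroup T + S: chaotic_c0_semigroup S + crossnormed_tensor tens
  for T :: "real \<Rightarrow> 'a::banach \<Rightarrow> 'a" and S :: "real \<Rightarrow> 'b::banach \<Rightarrow> 'b"
    and tens :: "'a \<Rightarrow> 'b \<Rightarrow> 'c::banach" +
  fixes R :: "real \<Rightarrow> 'c \<Rightarrow> 'c"
  assumes linear_R: "t \<ge> 0 \<Longrightarrow> linear (R t)"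
    and R_tens: "t \<ge> 0 \<Longrightarrow> R t (tens x y) = tens (T t x) (S t y)"
begin

lemma R_sum_tens:
  "t \<ge> 0 \<Longrightarrow> R t (\<Sum>i<(k::nat). tens (f i) (g i)) = (\<Sum>i<k. tens (T t (f i)) (S t (g i)))"
  using linear_R by (simp add: linear_sum R_tens)

lemma sum_tens_moved_near_0:
  fixes m :: nat
  assumes "s \<ge> 0" and x: "\<And>i. i < m \<Longrightarrow> norm (a i - x i) \<le> \<delta> \<and> norm (T s (x i)) \<le> \<delta>"
    and bound: "\<And>i t. i < m \<Longrightarrow> t \<ge> 0 \<Longrightarrow> norm (S t (b i)) \<le> B"
  shows "norm ((\<Sum>i<m. tens (x i) (b i)) - (\<Sum>i<m. tens (a i) (b i))) \<le> real m * \<delta> * B"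
    and "norm (R s (\<Sum>i<m. tens (x i) (b i))) \<le> real m * \<delta> * B"
proof -
  have "(\<Sum>i<m. tens (x i) (b i)) - (\<Sum>i<m. tens (a i) (b i)) = - (\<Sum>i<m. tens (a i - x i) (b i))"
    by (simp add: tens_diff_left sum_subtractf)
  moreover have "norm (\<Sum>i<m. tens (a i - x i) (b i)) \<le> real m * \<delta> * B"
    using x bound[of _ 0] by (intro norm_sum_tens_le) auto
  ultimately show "norm ((\<Sum>i<m. tens (x i) (b i)) - (\<Sum>i<m. tens (a i) (b i))) \<le> real m * \<delta> * B"
    by simp
  show "norm (R s (\<Sum>i<m. tens (x i) (b i))) \<le> real m * \<delta> * B"
    unfolding R_sum_tens[OF \<open>s \<ge> 0\<close>] using x bound \<open>s \<ge> 0\<close> by (intro norm_sum_tens_le) auto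
qed

text \<open>Each e j is reached from some S r (e j) at time s, since e j is periodic.\<close>
lemma periodic_sum_tens_reached_from_near_0:
  fixes n :: nat
  assumes "s \<ge> 0" and e: "\<forall>j<n. \<exists>q>0. S q (e j) = e j"
    and y: "\<And>j. j < n \<Longrightarrow> norm (y j) \<le> \<delta> \<and> norm (T s (y j) - c j) \<le> \<delta>"
    and bound: "\<And>j t. j < n \<Longrightarrow> t \<ge> 0 \<Longrightarrow> norm (S t (e j)) \<le> B"
  shows "\<exists>w. norm w \<le> real n * \<delta> * B \<and> norm (R s w - (\<Sum>j<n. tens (c j) (e j))) \<le> real n * \<delta> * B"
proof -
  have "\<exists>r\<ge>0. j < n \<longrightarrow> S s (S r (e j)) = e j" for j
  proof (cases "j < n")
    case True
    then obtain q where "q > 0" "S q (e j) = e j" using e by blast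
    then show ?thesis using S.periodic_preimage[OF _ _ \<open>s \<ge> 0\<close>] by blast
  qed auto
  then obtain r where r: "\<And>j. r j \<ge> 0" "\<And>j. j < n \<Longrightarrow> S s (S (r j) (e j)) = e j" by metis
  define w where "w = (\<Sum>j<n. tens (y j) (S (r j) (e j)))"
  have "norm w \<le> real n * \<delta> * B"
    unfolding w_def using y bound r by (intro norm_sum_tens_le) auto
  moreover have "R s w - (\<Sum>j<n. tens (c j) (e j)) = (\<Sum>j<n. tens (T s (y j) - c j) (e j))"
    unfolding w_def R_sum_tens[OF \<open>s \<ge> 0\<close>] using r by (simp add: tens_diff_left sum_subtractf)
  moreover have "norm (\<Sum>j<n. tens (T s (y j) - c j) (e j)) \<le> real n * \<delta> * B"
    using y bound[of _ 0] by (intro norm_sum_tens_le) auto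
  ultimately show ?thesis by auto
qed

text \<open>All m + n first factors are moved by one syndetic family of hitting times of T.\<close>
lemma syndetic_hitting_of_periodic_sum_tens:
  fixes m n :: nat
  assumes b: "\<forall>i<m. \<exists>q>0. S q (b i) = b i" and e: "\<forall>j<n. \<exists>q>0. S q (e j) = e j"
    and "\<epsilon> > 0"
  shows "\<exists>L\<ge>0. \<forall>t\<ge>0. \<exists>s\<in>{t..t + L}. \<exists>u w.
           norm (u - (\<Sum>i<m. tens (a i) (b i))) < \<epsilon> \<and> norm (R s u) < \<epsilon> \<and>
           norm w < \<epsilon> \<and> norm (R s w - (\<Sum>j<n. tens (c j) (e j))) < \<epsilon>"
proof -
  obtain Bb where Bb: "Bb > 0" "\<forall>i<m. \<forall>t\<ge>0. norm (S t (b i)) \<le> Bb"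
    using S.periodic_orbits_bounded[OF b] by blast
  obtain Be where Be: "\<forall>j<n. \<forall>t\<ge>0. norm (S t (e j)) \<le> Be"
    using S.periodic_orbits_bounded[OF e] by blast
  define B where "B = max Bb Be"
  have b_bound: "norm (S t (b i)) \<le> B" if "i < m" "t \<ge> 0" for i t
    using Bb that by (auto simp: B_def le_max_iff_disj)
  have e_bound: "norm (S t (e j)) \<le> B" if "j < n" "t \<ge> 0" for j t
    using Be that by (auto simp: B_def le_max_iff_disj)
  define \<delta> where "\<delta> = \<epsilon> / ((real (m + n) + 1) * B)"
  have "\<delta> > 0" using \<open>\<epsilon> > 0\<close> Bb by (simp add: \<delta>_def B_def)
  have \<delta>: "real k * \<delta> * B < \<epsilon>" if "k \<le> m + n" for k
  proof -
    have "real k * \<delta> * B = real k * \<epsilon> / (real (m + n) + 1)"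
      using Bb by (simp add: \<delta>_def B_def)
    also have "\<dots> < \<epsilon>"
      using that \<open>\<epsilon> > 0\<close> mult_strict_right_mono[of "real k" "real (m + n) + 1" \<epsilon>]
      by (simp add: field_simps)
    finally show ?thesis .
  qed
  define U where "U i = ball (if i < m then a i else 0) \<delta>" for i
  define V where "V i = ball (if i < m then 0 else c (i - m)) \<delta>" for i
  have "\<forall>i<m + n. open (U i) \<and> U i \<noteq> {} \<and> open (V i) \<and> V i \<noteq> {}"
    using \<open>\<delta> > 0\<close> by (simp add: U_def V_def)
  then obtain L where L: "L \<ge> 0"
    "\<forall>t\<ge>0. \<exists>s\<in>{t..t + L}. \<exists>x. \<forall>i<m + n. x i \<in> U i \<and> T s (x i) \<in> V i"
    using T.syndetic_transitive_finite_family by blast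
  have hit: "\<exists>u w. norm (u - (\<Sum>i<m. tens (a i) (b i))) < \<epsilon> \<and> norm (R s u) < \<epsilon> \<and>
           norm w < \<epsilon> \<and> norm (R s w - (\<Sum>j<n. tens (c j) (e j))) < \<epsilon>"
    if s: "s \<ge> 0" and x: "\<forall>i<m + n. x i \<in> U i \<and> T s (x i) \<in> V i" for s x
  proof -
    have "norm (a i - x i) \<le> \<delta> \<and> norm (T s (x i)) \<le> \<delta>" if "i < m" for i
      using x[rule_format, of i] that by (auto simp: U_def V_def dist_norm)
    note u = sum_tens_moved_near_0[where m = m and a = a and x = x and b = b and \<delta> = \<delta> and B = B,
        OF s this b_bound]
    have "norm (x (m + j)) \<le> \<delta> \<and> norm (T s (x (m + j)) - c j) \<le> \<delta>" if "j < n" for j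
      using x[rule_format, of "m + j"] that by (auto simp: U_def V_def dist_norm norm_minus_commute)
    from periodic_sum_tens_reached_from_near_0[where n = n and e = e and y = "\<lambda>j. x (m + j)"
        and \<delta> = \<delta> and c = c and B = B, OF s e this e_bound]
    obtain w where "norm w \<le> real n * \<delta> * B"
      "norm (R s w - (\<Sum>j<n. tens (c j) (e j))) \<le> real n * \<delta> * B"
      by blast
    then show ?thesis using u \<delta>[of m] \<delta>[of n] by (intro exI[of _ "\<Sum>i<m. tens (x i) (b i)"] exI[of _ w]) auto
  qed
  show ?thesis
  proof (intro exI[of _ L] conjI allI impI)
    fix t :: real assume "t \<ge> 0"
    then obtain s x where "s \<in> {t..t + L}" "\<forall>i<m + n. x i \<in> U i \<and> T s (x i) \<in> V i"
      using L(2) by blast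
    moreover from this(1) have "s \<ge> 0" using \<open>t \<ge> 0\<close> by simp
    ultimately show "\<exists>s\<in>{t..t + L}. \<exists>u w. norm (u - (\<Sum>i<m. tens (a i) (b i))) < \<epsilon> \<and>
        norm (R s u) < \<epsilon> \<and> norm w < \<epsilon> \<and> norm (R s w - (\<Sum>j<n. tens (c j) (e j))) < \<epsilon>"
      using hit by blast
  qed (rule L(1))
qed

theorem recurrent_hypercyclicity: "recurrent_hypercyclicity_criterion R"
  unfolding recurrent_hypercyclicity_criterion_def
proof (intro allI impI)
  fix U V W :: "'c set" assume H: "open U \<and> U \<noteq> {} \<and> open V \<and> V \<noteq> {} \<and> open W \<and> 0 \<in> W"
  then obtain u0 v0 where "u0 \<in> U" "v0 \<in> V" by blast
  then obtain \<epsilon>U \<epsilon>V \<epsilon>W where "\<epsilon>U > 0" "ball u0 \<epsilon>U \<subseteq> U" "\<epsilon>V > 0" "ball v0 \<epsilon>V \<subseteq> V"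
    "\<epsilon>W > 0" "ball 0 \<epsilon>W \<subseteq> W"
    using H by (meson open_contains_ball)
  define \<epsilon> where "\<epsilon> = min (min \<epsilon>U \<epsilon>V / 2) \<epsilon>W"
  have "\<epsilon> > 0" using \<open>\<epsilon>U > 0\<close> \<open>\<epsilon>V > 0\<close> \<open>\<epsilon>W > 0\<close> by (simp add: \<epsilon>_def)
  have balls: "ball u0 (2 * \<epsilon>) \<subseteq> U" "ball v0 (2 * \<epsilon>) \<subseteq> V" "ball 0 \<epsilon> \<subseteq> W"
    using \<open>ball u0 \<epsilon>U \<subseteq> U\<close> \<open>ball v0 \<epsilon>V \<subseteq> V\<close> \<open>ball 0 \<epsilon>W \<subseteq> W\<close>
    by (auto simp: \<epsilon>_def)
  have periodic_dense: "\<exists>b\<in>ball y r. \<exists>q>0. S q b = b" if "r > 0" for y r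
    using S.periodic_points_dense[of "ball y r"] that by auto
  obtain m a b where b: "\<forall>i<(m::nat). \<exists>q>0. S q (b i) = b i"
    and ab: "norm (u0 - (\<Sum>i<m. tens (a i) (b i))) < \<epsilon>"
    using approx_by_sum_tens[OF periodic_dense \<open>\<epsilon> > 0\<close>] by blast
  obtain n c e where e: "\<forall>j<(n::nat). \<exists>q>0. S q (e j) = e j"
    and ce: "norm (v0 - (\<Sum>j<n. tens (c j) (e j))) < \<epsilon>"
    using approx_by_sum_tens[OF periodic_dense \<open>\<epsilon> > 0\<close>] by blast
  obtain L where "L \<ge> 0" and L: "\<forall>t\<ge>0. \<exists>s\<in>{t..t + L}. \<exists>u w.
           norm (u - (\<Sum>i<m. tens (a i) (b i))) < \<epsilon> \<and> norm (R s u) < \<epsilon> \<and>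
           norm w < \<epsilon> \<and> norm (R s w - (\<Sum>j<n. tens (c j) (e j))) < \<epsilon>"
    using syndetic_hitting_of_periodic_sum_tens[OF b e \<open>\<epsilon> > 0\<close>] by blast
  have hits: "R s ` U \<inter> W \<noteq> {} \<and> R s ` W \<inter> V \<noteq> {}"
    if "norm (u - (\<Sum>i<m. tens (a i) (b i))) < \<epsilon>" "norm (R s u) < \<epsilon>"
      "norm w < \<epsilon>" "norm (R s w - (\<Sum>j<n. tens (c j) (e j))) < \<epsilon>" for s u w
  proof -
    have "norm (u0 - u) < \<epsilon> + \<epsilon>"
      using norm_diff_triangle_less ab that(1) by (metis norm_minus_commute)
    then have "u \<in> U" using balls(1) by (auto simp: dist_norm)
    moreover have "norm (v0 - R s w) < \<epsilon> + \<epsilon>"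
      using norm_diff_triangle_less ce that(4) by (metis norm_minus_commute)
    then have "R s w \<in> V" using balls(2) by (auto simp: dist_norm)
    moreover have "R s u \<in> W" "w \<in> W" using that(2,3) balls(3) by auto
    ultimately show ?thesis by blast
  qed
  show "\<exists>L\<ge>0. \<forall>t\<ge>0. \<exists>s\<in>{t..t + L}. R s ` U \<inter> W \<noteq> {} \<and> R s ` W \<inter> V \<noteq> {}"
  proof (intro exI[of _ L] conjI allI impI)
    fix t :: real assume "t \<ge> 0"
    then obtain s u w where "s \<in> {t..t + L}" "norm (u - (\<Sum>i<m. tens (a i) (b i))) < \<epsilon>"
      "norm (R s u) < \<epsilon>" "norm w < \<epsilon>" "norm (R s w - (\<Sum>j<n. tens (c j) (e j))) < \<epsilon>"
      using L by blast
    then show "\<exists>s\<in>{t..t + L}. R s ` U \<inter> W \<noteq> {} \<and> R s ` W \<inter> V \<noteq> {}"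
      using hits by blast
  qed (rule \<open>L \<ge> 0\<close>)
qed

end

theorem corollary2p2:
  fixes T :: "real \<Rightarrow> 'a::banach \<Rightarrow> 'a"
    and S :: "real \<Rightarrow> 'b::banach \<Rightarrow> 'b"
    and tens :: "'a \<Rightarrow> 'b \<Rightarrow> 'c::banach"
    and R :: "real \<Rightarrow> 'c \<Rightarrow> 'c"
  assumes "strongly_continuous_semigroup T" and "chaotic_sg T"
    and "strongly_continuous_semigroup S" and "chaotic_sg S"
    and "tensor_completion tens" and "uniform_crossnorm tens"
    and "\<forall>t\<ge>0. bounded_linear (R t)"
    and "\<forall>t\<ge>0. \<forall>x y. R t (tens x y) = tens (T t x) (S t y)"
  shows "recurrent_hypercyclicity_criterion R"
proof -
  have "tensor_product_semigroup T S tens R"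
    using assms by (simp add: tensor_product_semigroup_def tensor_product_semigroup_axioms_def
        chaotic_c0_semigroup_def chaotic_c0_semigroup_axioms_def c0_semigroup_def
        crossnormed_tensor_def bounded_linear.linear)
  then show ?thesis by (rule tensor_product_semigroup.recurrent_hypercyclicity)
qed

end
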